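(* The cut rule is admissible in ${\sf GWF_{N_2}}$: for every $D\in{\sf Frm_2}$ and all finite multisets $\Gamma,\Gamma',\Delta,\Delta'$ of ${\sf Frm_2}$-formulas, if $\Gamma\Rightarrow D,\Delta$ and $D,\Gamma'\Rightarrow\Delta'$ are derivable in ${\sf GWF_{N_2}}$, then $\Gamma,\Gamma'\Rightarrow\Delta,\Delta'$ is derivable in ${\sf GWF_{N_2}}$.
   Context: Language: countably many atoms $p,q,\dots$, the constant $\bot$, and binary connectives $\wedge,\vee,\rightarrow$ ($\rightarrow$ is strict implication). ${\sf Frm}$ is the set of formulas built from atoms and $\bot$ with $\wedge,\vee,\rightarrow$; $A,B,C,D$ range over ${\sf Frm}$. Let $\supset$ be a new binary symbol (material implication) and ${\sf Frm_1}={\sf Frm}\cup\{A\supset B : A,B\in{\sf Frm}\}$ (no nesting of $\supset$). ${\sf Frm_2}$ is the smallest set containing ${\sf Frm_1}$ and closed under $\wedge$ and $\vee$; $X,Y$ range over ${\sf Frm_2}$. A sequent is $\Gamma\Rightarrow\Delta$ with $\Gamma,\Delta$ finite multisets of ${\sf Frm_2}$-formulas. The calculus ${\sf GWF_{N_2}}$ has initial sequents $(id)$ $p,\Gamma\Rightarrow\Delta,p$ ($p$ an atom) and $(L_\bot)$ $\bot,\Gamma\Rightarrow\Delta$, and rules (premises / conclusion): $(L_\wedge)$ $X,Y,\Gamma\Rightarrow\Delta$ / $X\wedge Y,\Gamma\Rightarrow\Delta$; $(R_\wedge)$ $\Gamma\Rightarrow\Delta,X$ and $\Gamma\Rightarrow\Delta,Y$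 / $\Gamma\Rightarrow\Delta,X\wedge Y$; $(L_\vee)$ $X,\Gamma\Rightarrow\Delta$ and $Y,\Gamma\Rightarrow\Delta$ / $X\vee Y,\Gamma\Rightarrow\Delta$; $(R_\vee)$ $\Gamma\Rightarrow\Delta,X,Y$ / $\Gamma\Rightarrow\Delta,X\vee Y$; $(L_\supset)$ $\Gamma\Rightarrow\Delta,A$ and $B,\Gamma\Rightarrow\Delta$ / $A\supset B,\Gamma\Rightarrow\Delta$; $(R_\supset)$ $A,\Gamma\Rightarrow\Delta,B$ / $\Gamma\Rightarrow\Delta,A\supset B$; $(LR_\rightarrow)$ $C\supset D,A\Rightarrow B$ / $\Gamma,C\rightarrow D\Rightarrow\Delta,A\rightarrow B$; $(R_\rightarrow)$ $A\Rightarrow B$ / $\Gamma\Rightarrow\Delta,A\rightarrow B$. Here $A,B,C,D\in{\sf Frm}$, $X,Y\in{\sf Frm_2}$, and $\Gamma,\Delta$ are arbitrary finite multisets of ${\sf Frm_2}$-formulas. *)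

theory Defs
  imports Main "HOL-Library.Multiset"
begin

text \<open>Formulas. Imp is strict implication, MImp is material implication.\<close>
datatype fm = Atom nat | Bot | And fm fm | Or fm fm | Imp fm fm | MImp fm fm

fun is_frm :: "fm \<Rightarrow> bool" where
  "is_frm (Atom p) = True"
| "is_frm Bot = True"
| "is_frm (And A B) = (is_frm A \<and> is_frm B)"
| "is_frm (Or A B) = (is_frm A \<and> is_frm B)"
| "is_frm (Imp A B) = (is_frm A \<and> is_frm B)"
| "is_frm (MImp A B) = False"

definition is_frm1 :: "fm \<Rightarrow> bool" where
  "is_frm1 X \<longleftrightarrow> is_frm X \<or> (\<exists>A B. X = MImp A B \<and> is_frm A \<and> is_frm B)"

inductive is_frm2 :: "fm \<Rightarrow> bool" where
  base: "is_frm1 X \<Longrightarrow> is_frm2 X"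
| conj: "is_frm2 X \<Longrightarrow> is_frm2 Y \<Longrightarrow> is_frm2 (And X Y)"
| disj: "is_frm2 X \<Longrightarrow> is_frm2 Y \<Longrightarrow> is_frm2 (Or X Y)"

definition wf_ms :: "fm multiset \<Rightarrow> bool" where
  "wf_ms M \<longleftrightarrow> (\<forall>X\<in>#M. is_frm2 X)"

inductive deriv :: "fm multiset \<Rightarrow> fm multiset \<Rightarrow> bool" where
  id: "wf_ms \<Gamma> \<Longrightarrow> wf_ms \<Delta> \<Longrightarrow> deriv (add_mset (Atom p) \<Gamma>) (add_mset (Atom p) \<Delta>)"
| L_bot: "wf_ms \<Gamma> \<Longrightarrow> wf_ms \<Delta> \<Longrightarrow> deriv (add_mset Bot \<Gamma>) \<Delta>"
| L_and: "is_frm2 X \<Longrightarrow> is_frm2 Y \<Longrightarrow> deriv (add_mset X (add_mset Y \<Gamma>)) \<Delta>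
          \<Longrightarrow> deriv (add_mset (And X Y) \<Gamma>) \<Delta>"
| R_and: "is_frm2 X \<Longrightarrow> is_frm2 Y \<Longrightarrow> deriv \<Gamma> (add_mset X \<Delta>) \<Longrightarrow> deriv \<Gamma> (add_mset Y \<Delta>)
          \<Longrightarrow> deriv \<Gamma> (add_mset (And X Y) \<Delta>)"
| L_or: "is_frm2 X \<Longrightarrow> is_frm2 Y \<Longrightarrow> deriv (add_mset X \<Gamma>) \<Delta> \<Longrightarrow> deriv (add_mset Y \<Gamma>) \<Delta>
          \<Longrightarrow> deriv (add_mset (Or X Y) \<Gamma>) \<Delta>"
| R_or: "is_frm2 X \<Longrightarrow> is_frm2 Y \<Longrightarrow> deriv \<Gamma> (add_mset X (add_mset Y \<Delta>))
          \<Longrightarrow> deriv \<Gamma> (add_mset (Or X Y) \<Delta>)"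
| L_mimp: "is_frm A \<Longrightarrow> is_frm B \<Longrightarrow> deriv \<Gamma> (add_mset A \<Delta>) \<Longrightarrow> deriv (add_mset B \<Gamma>) \<Delta>
          \<Longrightarrow> deriv (add_mset (MImp A B) \<Gamma>) \<Delta>"
| R_mimp: "is_frm A \<Longrightarrow> is_frm B \<Longrightarrow> deriv (add_mset A \<Gamma>) (add_mset B \<Delta>)
          \<Longrightarrow> deriv \<Gamma> (add_mset (MImp A B) \<Delta>)"
| LR_imp: "is_frm A \<Longrightarrow> is_frm B \<Longrightarrow> is_frm C \<Longrightarrow> is_frm D \<Longrightarrow> wf_ms \<Gamma> \<Longrightarrow> wf_ms \<Delta>
          \<Longrightarrow> deriv {# MImp C D, A #} {# B #}
          \<Longrightarrow> deriv (add_mset (Imp C D) \<Gamma>) (add_mset (Imp A B) \<Delta>)"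
| R_imp: "is_frm A \<Longrightarrow> is_frm B \<Longrightarrow> wf_ms \<Gamma> \<Longrightarrow> wf_ms \<Delta>
          \<Longrightarrow> deriv {# A #} {# B #}
          \<Longrightarrow> deriv \<Gamma> (add_mset (Imp A B) \<Delta>)"

end

theory Submission
  imports Defs
begin

text \<open>
  By weakening, it suffices to cut with a shared context, which we show by structural induction
  on the cut formula. The rules for \<open>\<and>\<close>, \<open>\<or>\<close> and material implication are invertible, so a cut
  on such a formula splits into cuts on its components. A cut on an atom, on \<open>\<bottom>\<close> or on a
  strict implication is pushed up the derivation of the premise \<open>\<Gamma> \<Rightarrow> F, \<Delta>\<close>. There \<open>F\<close> is
  principal only in an axiom, which is settled by contracting an atom, or as \<open>A \<rightarrow> B\<close> in
  \<open>R\<^sub>\<rightarrow>\<close> or \<open>LR\<^sub>\<rightarrow>\<close>. In the latter case every principal use of \<open>A \<rightarrow> B\<close> in the other premise is an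
  \<open>LR\<^sub>\<rightarrow>\<close> step with premise \<open>A \<supset> B, A' \<Rightarrow> B'\<close>, and \<open>A \<supset> B\<close> is derivable from \<open>A \<Rightarrow> B\<close>
  (respectively from \<open>C \<supset> D\<close>, using \<open>C \<supset> D, A \<Rightarrow> B\<close>); cutting it away is a cut on a smaller
  formula.
\<close>

lemma wf_ms_empty [simp]: "wf_ms {#}"
  by (simp add: wf_ms_def)

lemma wf_ms_add_mset [simp]: "wf_ms (add_mset X M) \<longleftrightarrow> is_frm2 X \<and> wf_ms M"
  by (auto simp: wf_ms_def)

lemma wf_ms_union [simp]: "wf_ms (M + N) \<longleftrightarrow> wf_ms M \<and> wf_ms N"
  by (auto simp: wf_ms_def)

lemma is_frm2_if_is_frm: "is_frm A \<Longrightarrow> is_frm2 A"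
  by (simp add: is_frm1_def is_frm2.base)

lemma is_frm2_Atom [simp]: "is_frm2 (Atom p)"
  and is_frm2_Bot [simp]: "is_frm2 Bot"
  by (simp_all add: is_frm2_if_is_frm)

lemma is_frm2_MImp: "is_frm A \<Longrightarrow> is_frm B \<Longrightarrow> is_frm2 (MImp A B)"
  by (auto simp: is_frm1_def intro: is_frm2.base)

lemma is_frm2_AndD: "is_frm2 (And X Y) \<Longrightarrow> is_frm2 X \<and> is_frm2 Y"
  by (erule is_frm2.cases) (auto simp: is_frm1_def intro: is_frm2_if_is_frm)

lemma is_frm2_OrD: "is_frm2 (Or X Y) \<Longrightarrow> is_frm2 X \<and> is_frm2 Y"
  by (erule is_frm2.cases) (auto simp: is_frm1_def intro: is_frm2_if_is_frm)

lemma is_frm2_MImpD: "is_frm2 (MImp A B) \<Longrightarrow> is_frm A \<and> is_frm B"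
  by (erule is_frm2.cases) (auto simp: is_frm1_def)

lemma deriv_wf: "deriv \<Gamma> \<Delta> \<Longrightarrow> wf_ms \<Gamma> \<and> wf_ms \<Delta>"
  by (induction rule: deriv.induct) (auto intro: is_frm2_if_is_frm is_frm2_MImp is_frm2.intros)

lemma deriv_weaken:
  "deriv \<Gamma> \<Delta> \<Longrightarrow> wf_ms \<Gamma>' \<Longrightarrow> wf_ms \<Delta>' \<Longrightarrow> deriv (\<Gamma> + \<Gamma>') (\<Delta> + \<Delta>')"
  by (induction arbitrary: \<Gamma>' \<Delta>' rule: deriv.induct) (auto intro: deriv.intros)

lemma deriv_weaken_left: "deriv \<Gamma> \<Delta> \<Longrightarrow> is_frm2 X \<Longrightarrow> deriv (add_mset X \<Gamma>) \<Delta>"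
  using deriv_weaken[of \<Gamma> \<Delta> "{#X#}" "{#}"] by simp

lemma deriv_weaken_right: "deriv \<Gamma> \<Delta> \<Longrightarrow> is_frm2 X \<Longrightarrow> deriv \<Gamma> (add_mset X \<Delta>)"
  using deriv_weaken[of \<Gamma> \<Delta> "{#}" "{#X#}"] by simp

lemma deriv_idI:
  "Atom p \<in># \<Gamma> \<Longrightarrow> Atom p \<in># \<Delta> \<Longrightarrow> wf_ms \<Gamma> \<Longrightarrow> wf_ms \<Delta> \<Longrightarrow> deriv \<Gamma> \<Delta>"
  by (metis deriv.id insert_DiffM wf_ms_add_mset)

lemma deriv_L_botI: "Bot \<in># \<Gamma> \<Longrightarrow> wf_ms \<Gamma> \<Longrightarrow> wf_ms \<Delta> \<Longrightarrow> deriv \<Gamma> \<Delta>"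
  by (metis deriv.L_bot insert_DiffM wf_ms_add_mset)

lemma deriv_LR_impI:
  "Imp C D \<in># \<Gamma> \<Longrightarrow> Imp A B \<in># \<Delta> \<Longrightarrow> is_frm A \<Longrightarrow> is_frm B \<Longrightarrow> is_frm C \<Longrightarrow> is_frm D
   \<Longrightarrow> wf_ms \<Gamma> \<Longrightarrow> wf_ms \<Delta> \<Longrightarrow> deriv {#MImp C D, A#} {#B#} \<Longrightarrow> deriv \<Gamma> \<Delta>"
  by (metis deriv.LR_imp insert_DiffM wf_ms_add_mset)

lemma add_mset_eq_add_msetD:
  "add_mset a M = add_mset b N \<Longrightarrow> a \<noteq> b \<Longrightarrow> \<exists>K. M = add_mset b K \<and> N = add_mset a K"
  by (auto simp: add_eq_conv_ex)

definition invertible :: "fm \<Rightarrow> bool" where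
  "invertible F \<longleftrightarrow> (\<exists>X Y. F = And X Y \<or> F = Or X Y \<or> F = MImp X Y)"

fun left_premises :: "fm \<Rightarrow> fm multiset \<Rightarrow> fm multiset \<Rightarrow> bool" where
  "left_premises (And X Y) \<Gamma> \<Delta> \<longleftrightarrow> deriv (add_mset X (add_mset Y \<Gamma>)) \<Delta>"
| "left_premises (Or X Y) \<Gamma> \<Delta> \<longleftrightarrow> deriv (add_mset X \<Gamma>) \<Delta> \<and> deriv (add_mset Y \<Gamma>) \<Delta>"
| "left_premises (MImp A B) \<Gamma> \<Delta> \<longleftrightarrow> deriv \<Gamma> (add_mset A \<Delta>) \<and> deriv (add_mset B \<Gamma>) \<Delta>"
| "left_premises _ \<Gamma> \<Delta> \<longleftrightarrow> False"

fun right_premises :: "fm \<Rightarrow> fm multiset \<Rightarrow> fm multiset \<Rightarrow> bool" where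
  "right_premises (And X Y) \<Gamma> \<Delta> \<longleftrightarrow> deriv \<Gamma> (add_mset X \<Delta>) \<and> deriv \<Gamma> (add_mset Y \<Delta>)"
| "right_premises (Or X Y) \<Gamma> \<Delta> \<longleftrightarrow> deriv \<Gamma> (add_mset X (add_mset Y \<Delta>))"
| "right_premises (MImp A B) \<Gamma> \<Delta> \<longleftrightarrow> deriv (add_mset A \<Gamma>) (add_mset B \<Delta>)"
| "right_premises _ \<Gamma> \<Delta> \<longleftrightarrow> False"

text \<open>
  In a derivation of \<open>F, \<Gamma>\<^sub>0 \<Rightarrow> \<Delta>\<close>, the formula \<open>F\<close> may be traded for \<open>\<Gamma>\<^sub>L \<Rightarrow> \<Delta>\<^sub>L\<close>
  whenever this is possible at the principal introductions of \<open>F\<close>. A duplicated atom has no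
  such introductions, and then the lemma is contraction.
\<close>
lemma deriv_left_inversion:
  assumes "deriv \<Gamma> \<Delta>" "\<Gamma> = add_mset F \<Gamma>\<^sub>0"
    and "invertible F \<or> (\<exists>p. F = Atom p \<and> F \<in># \<Gamma>\<^sub>0)"
    and "wf_ms \<Gamma>\<^sub>L" "wf_ms \<Delta>\<^sub>L"
    and "\<And>\<Gamma>\<^sub>1 \<Delta>\<^sub>1. left_premises F \<Gamma>\<^sub>1 \<Delta>\<^sub>1 \<Longrightarrow> wf_ms \<Gamma>\<^sub>1 \<Longrightarrow> wf_ms \<Delta>\<^sub>1 \<Longrightarrow> deriv (\<Gamma>\<^sub>L + \<Gamma>\<^sub>1) (\<Delta>\<^sub>L + \<Delta>\<^sub>1)"
  shows "deriv (\<Gamma>\<^sub>L + \<Gamma>\<^sub>0) (\<Delta>\<^sub>L + \<Delta>)"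
  using assms
proof (induction arbitrary: \<Gamma>\<^sub>0 rule: deriv.induct)
  case (id \<Gamma> \<Delta> p)
  show ?case
  proof (cases "F = Atom p")
    case True
    with id show ?thesis by (auto simp: invertible_def intro!: deriv_idI)
  next
    case False
    with id obtain K where "\<Gamma>\<^sub>0 = add_mset (Atom p) K"
      using add_mset_eq_add_msetD[OF id.prems(1)[symmetric]] by metis
    with id show ?thesis by (auto intro!: deriv_idI[of p])
  qed
next
  case (L_bot \<Gamma> \<Delta>)
  show ?case
  proof (cases "F = Bot")
    case False
    with L_bot obtain K where "\<Gamma>\<^sub>0 = add_mset Bot K"
      using add_mset_eq_add_msetD[OF L_bot.prems(1)[symmetric]] by metis
    with L_bot show ?thesis by (auto intro!: deriv_L_botI)
  qed (use L_bot in \<open>auto simp: invertible_def\<close>)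
next
  case (L_and X Y \<Gamma> \<Delta>)
  show ?case
  proof (cases "F = And X Y")
    case True
    with L_and show ?thesis using deriv_wf[OF L_and.hyps(3)] by auto
  next
    case False
    then obtain K where K: "\<Gamma> = add_mset F K" "\<Gamma>\<^sub>0 = add_mset (And X Y) K"
      using add_mset_eq_add_msetD[OF L_and.prems(1)[symmetric]] by metis
    have "deriv (\<Gamma>\<^sub>L + add_mset X (add_mset Y K)) (\<Delta>\<^sub>L + \<Delta>)"
      by (rule L_and.IH) (use L_and.prems K in \<open>auto simp: add_mset_commute\<close>)
    with K L_and.hyps show ?thesis by (simp add: deriv.L_and)
  qed
next
  case (R_and X Y \<Gamma> \<Delta>)
  then show ?case by (simp add: deriv.R_and)
next
  case (L_or X Y \<Gamma> \<Delta>)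
  show ?case
  proof (cases "F = Or X Y")
    case True
    with L_or show ?thesis using deriv_wf[OF L_or.hyps(3)] deriv_wf[OF L_or.hyps(4)] by auto
  next
    case False
    then obtain K where K: "\<Gamma> = add_mset F K" "\<Gamma>\<^sub>0 = add_mset (Or X Y) K"
      using add_mset_eq_add_msetD[OF L_or.prems(1)[symmetric]] by metis
    have "deriv (\<Gamma>\<^sub>L + add_mset X K) (\<Delta>\<^sub>L + \<Delta>)"
      by (rule L_or.IH(1)) (use L_or.prems K in \<open>auto simp: add_mset_commute\<close>)
    moreover have "deriv (\<Gamma>\<^sub>L + add_mset Y K) (\<Delta>\<^sub>L + \<Delta>)"
      by (rule L_or.IH(2)) (use L_or.prems K in \<open>auto simp: add_mset_commute\<close>)
    ultimately show ?thesis using K L_or.hyps by (simp add: deriv.L_or)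
  qed
next
  case (R_or X Y \<Gamma> \<Delta>)
  then show ?case by (simp add: deriv.R_or)
next
  case (L_mimp A B \<Gamma> \<Delta>)
  show ?case
  proof (cases "F = MImp A B")
    case True
    with L_mimp show ?thesis using deriv_wf[OF L_mimp.hyps(3)] deriv_wf[OF L_mimp.hyps(4)] by auto
  next
    case False
    then obtain K where K: "\<Gamma> = add_mset F K" "\<Gamma>\<^sub>0 = add_mset (MImp A B) K"
      using add_mset_eq_add_msetD[OF L_mimp.prems(1)[symmetric]] by metis
    have "deriv (\<Gamma>\<^sub>L + K) (\<Delta>\<^sub>L + add_mset A \<Delta>)"
      by (rule L_mimp.IH(1)) (use L_mimp.prems K in \<open>auto simp: add_mset_commute\<close>)
    moreover have "deriv (\<Gamma>\<^sub>L + add_mset B K) (\<Delta>\<^sub>L + \<Delta>)"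
      by (rule L_mimp.IH(2)) (use L_mimp.prems K in \<open>auto simp: add_mset_commute\<close>)
    ultimately show ?thesis using K L_mimp.hyps by (simp add: deriv.L_mimp)
  qed
next
  case (R_mimp A B \<Gamma> \<Delta>)
  have "deriv (\<Gamma>\<^sub>L + add_mset A \<Gamma>\<^sub>0) (\<Delta>\<^sub>L + add_mset B \<Delta>)"
    by (rule R_mimp.IH) (use R_mimp.prems in \<open>auto simp: add_mset_commute\<close>)
  with R_mimp.hyps show ?case by (simp add: deriv.R_mimp)
next
  case (LR_imp A B C D \<Gamma> \<Delta>)
  then have "F \<noteq> Imp C D" by (auto simp: invertible_def)
  with LR_imp obtain K where "\<Gamma>\<^sub>0 = add_mset (Imp C D) K"
    using add_mset_eq_add_msetD[OF LR_imp.prems(1)[symmetric]] by metis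
  with LR_imp show ?case by (simp add: deriv.LR_imp)
next
  case (R_imp A B \<Gamma> \<Delta>)
  then show ?case by (simp add: deriv.R_imp)
qed

lemma deriv_right_inversion:
  assumes "deriv \<Gamma> \<Delta>" "\<Delta> = add_mset F \<Delta>\<^sub>0" "invertible F"
    and "wf_ms \<Gamma>\<^sub>R" "wf_ms \<Delta>\<^sub>R"
    and "\<And>\<Gamma>\<^sub>1 \<Delta>\<^sub>1. right_premises F \<Gamma>\<^sub>1 \<Delta>\<^sub>1 \<Longrightarrow> wf_ms \<Gamma>\<^sub>1 \<Longrightarrow> wf_ms \<Delta>\<^sub>1 \<Longrightarrow> deriv (\<Gamma>\<^sub>R + \<Gamma>\<^sub>1) (\<Delta>\<^sub>R + \<Delta>\<^sub>1)"
  shows "deriv (\<Gamma>\<^sub>R + \<Gamma>) (\<Delta>\<^sub>R + \<Delta>\<^sub>0)"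
  using assms
proof (induction arbitrary: \<Delta>\<^sub>0 rule: deriv.induct)
  case (id \<Gamma> \<Delta> p)
  then have "F \<noteq> Atom p" by (auto simp: invertible_def)
  with id obtain K where "\<Delta>\<^sub>0 = add_mset (Atom p) K"
    using add_mset_eq_add_msetD[OF id.prems(1)[symmetric]] by metis
  with id show ?case by (auto intro!: deriv_idI[of p])
next
  case (L_bot \<Gamma> \<Delta>)
  then show ?case by (auto intro!: deriv_L_botI)
next
  case (L_and X Y \<Gamma> \<Delta>)
  then show ?case by (simp add: deriv.L_and)
next
  case (R_and X Y \<Gamma> \<Delta>)
  show ?case
  proof (cases "F = And X Y")
    case True
    with R_and show ?thesis using deriv_wf[OF R_and.hyps(3)] deriv_wf[OF R_and.hyps(4)] by auto
  next
    case False
    then obtain K where K: "\<Delta> = add_mset F K" "\<Delta>\<^sub>0 = add_mset (And X Y) K"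
      using add_mset_eq_add_msetD[OF R_and.prems(1)[symmetric]] by metis
    have "deriv (\<Gamma>\<^sub>R + \<Gamma>) (\<Delta>\<^sub>R + add_mset X K)"
      by (rule R_and.IH(1)) (use R_and.prems K in \<open>auto simp: add_mset_commute\<close>)
    moreover have "deriv (\<Gamma>\<^sub>R + \<Gamma>) (\<Delta>\<^sub>R + add_mset Y K)"
      by (rule R_and.IH(2)) (use R_and.prems K in \<open>auto simp: add_mset_commute\<close>)
    ultimately show ?thesis using K R_and.hyps by (simp add: deriv.R_and)
  qed
next
  case (L_or X Y \<Gamma> \<Delta>)
  then show ?case by (simp add: deriv.L_or)
next
  case (R_or X Y \<Gamma> \<Delta>)
  show ?case
  proof (cases "F = Or X Y")
    case True
    with R_or show ?thesis using deriv_wf[OF R_or.hyps(3)] by auto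
  next
    case False
    then obtain K where K: "\<Delta> = add_mset F K" "\<Delta>\<^sub>0 = add_mset (Or X Y) K"
      using add_mset_eq_add_msetD[OF R_or.prems(1)[symmetric]] by metis
    have "deriv (\<Gamma>\<^sub>R + \<Gamma>) (\<Delta>\<^sub>R + add_mset X (add_mset Y K))"
      by (rule R_or.IH) (use R_or.prems K in \<open>auto simp: add_mset_commute\<close>)
    with K R_or.hyps show ?thesis by (simp add: deriv.R_or)
  qed
next
  case (L_mimp A B \<Gamma> \<Delta>)
  have "deriv (\<Gamma>\<^sub>R + \<Gamma>) (\<Delta>\<^sub>R + add_mset A \<Delta>\<^sub>0)"
    by (rule L_mimp.IH(1)) (use L_mimp.prems in \<open>auto simp: add_mset_commute\<close>)
  moreover have "deriv (\<Gamma>\<^sub>R + add_mset B \<Gamma>) (\<Delta>\<^sub>R + \<Delta>\<^sub>0)"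
    using L_mimp by blast
  ultimately show ?case using L_mimp.hyps by (simp add: deriv.L_mimp)
next
  case (R_mimp A B \<Gamma> \<Delta>)
  show ?case
  proof (cases "F = MImp A B")
    case True
    with R_mimp show ?thesis using deriv_wf[OF R_mimp.hyps(3)] by auto
  next
    case False
    then obtain K where K: "\<Delta> = add_mset F K" "\<Delta>\<^sub>0 = add_mset (MImp A B) K"
      using add_mset_eq_add_msetD[OF R_mimp.prems(1)[symmetric]] by metis
    have "deriv (\<Gamma>\<^sub>R + add_mset A \<Gamma>) (\<Delta>\<^sub>R + add_mset B K)"
      by (rule R_mimp.IH) (use R_mimp.prems K in \<open>auto simp: add_mset_commute\<close>)
    with K R_mimp.hyps show ?thesis by (simp add: deriv.R_mimp)
  qed
next
  case (LR_imp A B C D \<Gamma> \<Delta>)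
  then have "F \<noteq> Imp A B" by (auto simp: invertible_def)
  with LR_imp obtain K where "\<Delta>\<^sub>0 = add_mset (Imp A B) K"
    using add_mset_eq_add_msetD[OF LR_imp.prems(1)[symmetric]] by metis
  with LR_imp show ?case by (simp add: deriv.LR_imp)
next
  case (R_imp A B \<Gamma> \<Delta>)
  then have "F \<noteq> Imp A B" by (auto simp: invertible_def)
  with R_imp obtain K where "\<Delta>\<^sub>0 = add_mset (Imp A B) K"
    using add_mset_eq_add_msetD[OF R_imp.prems(1)[symmetric]] by metis
  with R_imp show ?case by (simp add: deriv.R_imp)
qed

lemma deriv_And_leftD: "deriv (add_mset (And X Y) \<Gamma>) \<Delta> \<Longrightarrow> deriv (add_mset X (add_mset Y \<Gamma>)) \<Delta>"
  using deriv_left_inversion[of _ \<Delta> "And X Y" \<Gamma> "{#X, Y#}" "{#}"] deriv_wf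
  by (fastforce simp: invertible_def dest: is_frm2_AndD)

lemma deriv_Or_leftD1: "deriv (add_mset (Or X Y) \<Gamma>) \<Delta> \<Longrightarrow> deriv (add_mset X \<Gamma>) \<Delta>"
  using deriv_left_inversion[of _ \<Delta> "Or X Y" \<Gamma> "{#X#}" "{#}"] deriv_wf
  by (fastforce simp: invertible_def dest: is_frm2_OrD)

lemma deriv_Or_leftD2: "deriv (add_mset (Or X Y) \<Gamma>) \<Delta> \<Longrightarrow> deriv (add_mset Y \<Gamma>) \<Delta>"
  using deriv_left_inversion[of _ \<Delta> "Or X Y" \<Gamma> "{#Y#}" "{#}"] deriv_wf
  by (fastforce simp: invertible_def dest: is_frm2_OrD)

lemma deriv_MImp_leftD1: "deriv (add_mset (MImp A B) \<Gamma>) \<Delta> \<Longrightarrow> deriv \<Gamma> (add_mset A \<Delta>)"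
  using deriv_left_inversion[of _ \<Delta> "MImp A B" \<Gamma> "{#}" "{#A#}"] deriv_wf
  by (fastforce simp: invertible_def dest: is_frm2_MImpD intro: is_frm2_if_is_frm)

lemma deriv_MImp_leftD2: "deriv (add_mset (MImp A B) \<Gamma>) \<Delta> \<Longrightarrow> deriv (add_mset B \<Gamma>) \<Delta>"
  using deriv_left_inversion[of _ \<Delta> "MImp A B" \<Gamma> "{#B#}" "{#}"] deriv_wf
  by (fastforce simp: invertible_def dest: is_frm2_MImpD intro: is_frm2_if_is_frm)

lemma deriv_contract_Atom_left:
  "deriv (add_mset (Atom p) (add_mset (Atom p) \<Gamma>)) \<Delta> \<Longrightarrow> deriv (add_mset (Atom p) \<Gamma>) \<Delta>"
  using deriv_left_inversion[of _ \<Delta> "Atom p" "add_mset (Atom p) \<Gamma>" "{#}" "{#}"] by auto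

lemma deriv_And_rightD1: "deriv \<Gamma> (add_mset (And X Y) \<Delta>) \<Longrightarrow> deriv \<Gamma> (add_mset X \<Delta>)"
  using deriv_right_inversion[of \<Gamma> _ "And X Y" \<Delta> "{#}" "{#X#}"] deriv_wf
  by (fastforce simp: invertible_def dest: is_frm2_AndD)

lemma deriv_And_rightD2: "deriv \<Gamma> (add_mset (And X Y) \<Delta>) \<Longrightarrow> deriv \<Gamma> (add_mset Y \<Delta>)"
  using deriv_right_inversion[of \<Gamma> _ "And X Y" \<Delta> "{#}" "{#Y#}"] deriv_wf
  by (fastforce simp: invertible_def dest: is_frm2_AndD)

lemma deriv_Or_rightD: "deriv \<Gamma> (add_mset (Or X Y) \<Delta>) \<Longrightarrow> deriv \<Gamma> (add_mset X (add_mset Y \<Delta>))"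
  using deriv_right_inversion[of \<Gamma> _ "Or X Y" \<Delta> "{#}" "{#X, Y#}"] deriv_wf
  by (fastforce simp: invertible_def dest: is_frm2_OrD)

lemma deriv_MImp_rightD: "deriv \<Gamma> (add_mset (MImp A B) \<Delta>) \<Longrightarrow> deriv (add_mset A \<Gamma>) (add_mset B \<Delta>)"
  using deriv_right_inversion[of \<Gamma> _ "MImp A B" \<Delta> "{#A#}" "{#B#}"] deriv_wf
  by (fastforce simp: invertible_def dest: is_frm2_MImpD intro: is_frm2_if_is_frm)

text \<open>
  Left occurrences of \<open>Imp A B\<close> are principal only in \<open>LR_imp\<close>, whose premise
  \<open>MImp A B, A' \<Rightarrow> B'\<close> forgets the context. Hence \<open>Imp A B\<close> can be removed once every such
  premise yields the conclusion otherwise; the strict implications \<open>S\<close> of the context are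
  still present at each of these leaves.
\<close>
lemma deriv_remove_Imp_left:
  assumes "deriv \<Gamma> \<Delta>" "\<Gamma> = add_mset (Imp A B) \<Gamma>\<^sub>0"
    and "S \<subseteq> set_mset \<Gamma>\<^sub>0" "\<forall>X\<in>S. \<exists>C D. X = Imp C D"
    and "\<And>A' B' \<Gamma>\<^sub>1 \<Delta>\<^sub>1. deriv {#MImp A B, A'#} {#B'#} \<Longrightarrow> is_frm A' \<Longrightarrow> is_frm B'
      \<Longrightarrow> S \<subseteq> set_mset \<Gamma>\<^sub>1 \<Longrightarrow> wf_ms \<Gamma>\<^sub>1 \<Longrightarrow> wf_ms \<Delta>\<^sub>1 \<Longrightarrow> deriv \<Gamma>\<^sub>1 (add_mset (Imp A' B') \<Delta>\<^sub>1)"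
  shows "deriv \<Gamma>\<^sub>0 \<Delta>"
  using assms
proof (induction arbitrary: \<Gamma>\<^sub>0 rule: deriv.induct)
  case (id \<Gamma> \<Delta> p)
  then obtain K where "\<Gamma>\<^sub>0 = add_mset (Atom p) K"
    using add_mset_eq_add_msetD[OF id.prems(1)[symmetric]] by auto
  with id show ?case by (auto intro!: deriv_idI[of p])
next
  case (L_bot \<Gamma> \<Delta>)
  then obtain K where "\<Gamma>\<^sub>0 = add_mset Bot K"
    using add_mset_eq_add_msetD[OF L_bot.prems(1)[symmetric]] by auto
  with L_bot show ?case by (auto intro!: deriv_L_botI)
next
  case (L_and X Y \<Gamma> \<Delta>)
  obtain K where K: "\<Gamma> = add_mset (Imp A B) K" "\<Gamma>\<^sub>0 = add_mset (And X Y) K"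
    using add_mset_eq_add_msetD[OF L_and.prems(1)[symmetric]] by auto
  have "deriv (add_mset X (add_mset Y K)) \<Delta>"
    by (rule L_and.IH) (use L_and.prems K in \<open>auto simp: add_mset_commute\<close>)
  with K L_and.hyps show ?case by (simp add: deriv.L_and)
next
  case (R_and X Y \<Gamma> \<Delta>)
  then show ?case by (simp add: deriv.R_and)
next
  case (L_or X Y \<Gamma> \<Delta>)
  obtain K where K: "\<Gamma> = add_mset (Imp A B) K" "\<Gamma>\<^sub>0 = add_mset (Or X Y) K"
    using add_mset_eq_add_msetD[OF L_or.prems(1)[symmetric]] by auto
  have "deriv (add_mset X K) \<Delta>"
    by (rule L_or.IH(1)) (use L_or.prems K in \<open>auto simp: add_mset_commute\<close>)
  moreover have "deriv (add_mset Y K) \<Delta>"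
    by (rule L_or.IH(2)) (use L_or.prems K in \<open>auto simp: add_mset_commute\<close>)
  ultimately show ?case using K L_or.hyps by (simp add: deriv.L_or)
next
  case (R_or X Y \<Gamma> \<Delta>)
  then show ?case by (simp add: deriv.R_or)
next
  case (L_mimp C D \<Gamma> \<Delta>)
  obtain K where K: "\<Gamma> = add_mset (Imp A B) K" "\<Gamma>\<^sub>0 = add_mset (MImp C D) K"
    using add_mset_eq_add_msetD[OF L_mimp.prems(1)[symmetric]] by auto
  have "deriv K (add_mset C \<Delta>)"
    by (rule L_mimp.IH(1)) (use L_mimp.prems K in \<open>auto simp: add_mset_commute\<close>)
  moreover have "deriv (add_mset D K) \<Delta>"
    by (rule L_mimp.IH(2)) (use L_mimp.prems K in \<open>auto simp: add_mset_commute\<close>)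
  ultimately show ?case using K L_mimp.hyps by (simp add: deriv.L_mimp)
next
  case (R_mimp C D \<Gamma> \<Delta>)
  have "deriv (add_mset C \<Gamma>\<^sub>0) (add_mset D \<Delta>)"
    by (rule R_mimp.IH) (use R_mimp.prems in \<open>auto simp: add_mset_commute\<close>)
  with R_mimp.hyps show ?case by (simp add: deriv.R_mimp)
next
  case (LR_imp A' B' C D \<Gamma> \<Delta>)
  show ?case
  proof (cases "Imp C D = Imp A B")
    case True
    with LR_imp.prems(1) have "\<Gamma> = \<Gamma>\<^sub>0" "C = A" "D = B" by simp_all
    with LR_imp.hyps LR_imp.prems(2) show ?thesis
      by (intro LR_imp.prems(4)) simp_all
  next
    case False
    with LR_imp obtain K where "\<Gamma>\<^sub>0 = add_mset (Imp C D) K"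
      using add_mset_eq_add_msetD[OF LR_imp.prems(1)[symmetric]] by metis
    with LR_imp show ?thesis by (simp add: deriv.LR_imp)
  qed
next
  case (R_imp A' B' \<Gamma> \<Delta>)
  then show ?case by (simp add: deriv.R_imp)
qed

definition cut_admissible_on :: "fm \<Rightarrow> bool" where
  "cut_admissible_on F \<longleftrightarrow>
    (\<forall>\<Gamma> \<Delta>. deriv \<Gamma> (add_mset F \<Delta>) \<longrightarrow> deriv (add_mset F \<Gamma>) \<Delta> \<longrightarrow> deriv \<Gamma> \<Delta>)"

lemma cut_admissible_onD:
  "cut_admissible_on F \<Longrightarrow> deriv \<Gamma> (add_mset F \<Delta>) \<Longrightarrow> deriv (add_mset F \<Gamma>) \<Delta> \<Longrightarrow> deriv \<Gamma> \<Delta>"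
  by (auto simp: cut_admissible_on_def)

lemma cut_admissible_on_And:
  assumes "cut_admissible_on X" "cut_admissible_on Y"
  shows "cut_admissible_on (And X Y)"
  unfolding cut_admissible_on_def
proof (intro allI impI)
  fix \<Gamma> \<Delta>
  assume right: "deriv \<Gamma> (add_mset (And X Y) \<Delta>)" and left: "deriv (add_mset (And X Y) \<Gamma>) \<Delta>"
  have "is_frm2 Y"
    using deriv_wf[OF right] by (auto dest: is_frm2_AndD)
  have "deriv (add_mset Y \<Gamma>) (add_mset X \<Delta>)"
    using deriv_weaken_left[OF deriv_And_rightD1[OF right] \<open>is_frm2 Y\<close>] .
  then have "deriv (add_mset Y \<Gamma>) \<Delta>"
    using deriv_And_leftD[OF left] by (rule cut_admissible_onD[OF assms(1)])
  then show "deriv \<Gamma> \<Delta>"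
    by (rule cut_admissible_onD[OF assms(2) deriv_And_rightD2[OF right]])
qed

lemma cut_admissible_on_Or:
  assumes "cut_admissible_on X" "cut_admissible_on Y"
  shows "cut_admissible_on (Or X Y)"
  unfolding cut_admissible_on_def
proof (intro allI impI)
  fix \<Gamma> \<Delta>
  assume right: "deriv \<Gamma> (add_mset (Or X Y) \<Delta>)" and left: "deriv (add_mset (Or X Y) \<Gamma>) \<Delta>"
  have "is_frm2 Y"
    using deriv_wf[OF right] by (auto dest: is_frm2_OrD)
  have "deriv (add_mset X \<Gamma>) (add_mset Y \<Delta>)"
    using deriv_weaken_right[OF deriv_Or_leftD1[OF left] \<open>is_frm2 Y\<close>] .
  then have "deriv \<Gamma> (add_mset Y \<Delta>)"
    by (rule cut_admissible_onD[OF assms(1) deriv_Or_rightD[OF right]])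
  then show "deriv \<Gamma> \<Delta>"
    using deriv_Or_leftD2[OF left] by (rule cut_admissible_onD[OF assms(2)])
qed

lemma cut_admissible_on_MImp:
  assumes "cut_admissible_on A" "cut_admissible_on B"
  shows "cut_admissible_on (MImp A B)"
  unfolding cut_admissible_on_def
proof (intro allI impI)
  fix \<Gamma> \<Delta>
  assume right: "deriv \<Gamma> (add_mset (MImp A B) \<Delta>)" and left: "deriv (add_mset (MImp A B) \<Gamma>) \<Delta>"
  have "is_frm2 B"
    using deriv_wf[OF right] by (auto dest: is_frm2_MImpD intro: is_frm2_if_is_frm)
  have "deriv \<Gamma> (add_mset A (add_mset B \<Delta>))"
    using deriv_weaken_right[OF deriv_MImp_leftD1[OF left] \<open>is_frm2 B\<close>]
    by (simp only: add_mset_commute)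
  then have "deriv \<Gamma> (add_mset B \<Delta>)"
    using deriv_MImp_rightD[OF right] by (rule cut_admissible_onD[OF assms(1)])
  then show "deriv \<Gamma> \<Delta>"
    using deriv_MImp_leftD2[OF left] by (rule cut_admissible_onD[OF assms(2)])
qed

lemma deriv_cut_Imp_principal_R_imp:
  assumes "cut_admissible_on (MImp A B)" "is_frm A" "is_frm B"
    and "deriv {#A#} {#B#}" "deriv (add_mset (Imp A B) \<Gamma>) \<Delta>"
  shows "deriv \<Gamma> \<Delta>"
proof (rule deriv_remove_Imp_left[OF assms(5) refl, of "{}"])
  fix A' B' \<Gamma>\<^sub>1 \<Delta>\<^sub>1
  assume premise: "deriv {#MImp A B, A'#} {#B'#}" and "is_frm A'" "is_frm B'"
    and "wf_ms \<Gamma>\<^sub>1" "wf_ms \<Delta>\<^sub>1"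
  have "deriv {#A, A'#} {#B, B'#}"
    using deriv_weaken[OF assms(4), of "{#A'#}" "{#B'#}"] \<open>is_frm A'\<close> \<open>is_frm B'\<close>
    by (simp add: is_frm2_if_is_frm add_mset_commute)
  then have "deriv {#A'#} {#MImp A B, B'#}"
    by (rule deriv.R_mimp[OF assms(2,3)])
  then have "deriv {#A'#} {#B'#}"
    using cut_admissible_onD[OF assms(1) _ premise] by simp
  with \<open>is_frm A'\<close> \<open>is_frm B'\<close> \<open>wf_ms \<Gamma>\<^sub>1\<close> \<open>wf_ms \<Delta>\<^sub>1\<close>
  show "deriv \<Gamma>\<^sub>1 (add_mset (Imp A' B') \<Delta>\<^sub>1)"
    by (rule deriv.R_imp)
qed auto

lemma deriv_cut_Imp_principal_LR_imp:
  assumes "cut_admissible_on (MImp A B)" "is_frm A" "is_frm B" "is_frm C" "is_frm E"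
    and "deriv {#MImp C E, A#} {#B#}" "deriv (add_mset (Imp A B) (add_mset (Imp C E) \<Gamma>)) \<Delta>"
  shows "deriv (add_mset (Imp C E) \<Gamma>) \<Delta>"
proof (rule deriv_remove_Imp_left[OF assms(7) refl, of "{Imp C E}"])
  fix A' B' \<Gamma>\<^sub>1 \<Delta>\<^sub>1
  assume premise: "deriv {#MImp A B, A'#} {#B'#}" and "is_frm A'" "is_frm B'"
    and "{Imp C E} \<subseteq> set_mset \<Gamma>\<^sub>1" "wf_ms \<Gamma>\<^sub>1" "wf_ms \<Delta>\<^sub>1"
  have "deriv (add_mset A {#MImp C E, A'#}) {#B, B'#}"
    using deriv_weaken[OF assms(6), of "{#A'#}" "{#B'#}"] \<open>is_frm A'\<close> \<open>is_frm B'\<close>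
    by (simp add: is_frm2_if_is_frm add_mset_commute)
  then have "deriv {#MImp C E, A'#} {#MImp A B, B'#}"
    by (rule deriv.R_mimp[OF assms(2,3)])
  moreover have "deriv {#MImp A B, MImp C E, A'#} {#B'#}"
    using deriv_weaken_left[OF premise, of "MImp C E"] assms(4,5)
    by (simp add: is_frm2_MImp add_mset_commute)
  ultimately have "deriv {#MImp C E, A'#} {#B'#}"
    by (rule cut_admissible_onD[OF assms(1)])
  then show "deriv \<Gamma>\<^sub>1 (add_mset (Imp A' B') \<Delta>\<^sub>1)"
    using assms(4,5) \<open>is_frm A'\<close> \<open>is_frm B'\<close> \<open>{Imp C E} \<subseteq> set_mset \<Gamma>\<^sub>1\<close> \<open>wf_ms \<Gamma>\<^sub>1\<close> \<open>wf_ms \<Delta>\<^sub>1\<close>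
    by (auto intro!: deriv_LR_impI[of C E _ A' B'] is_frm2_if_is_frm)
qed auto

lemma deriv_cut_noninvertible:
  assumes "deriv \<Gamma> \<Delta>'" "\<Delta>' = add_mset F \<Delta>" "deriv (add_mset F \<Gamma>) \<Delta>" "\<not> invertible F"
    and cut_MImp: "\<And>A B. F = Imp A B \<Longrightarrow> cut_admissible_on (MImp A B)"
  shows "deriv \<Gamma> \<Delta>"
  using assms(1-4)
proof (induction arbitrary: \<Delta> rule: deriv.induct)
  case (id \<Gamma> \<Delta>' p)
  show ?case
  proof (cases "F = Atom p")
    case True
    with id.prems(1,2) show ?thesis by (simp add: deriv_contract_Atom_left)
  next
    case False
    with id obtain K where "\<Delta> = add_mset (Atom p) K"
      using add_mset_eq_add_msetD[OF id.prems(1)[symmetric]] by metis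
    with id show ?thesis by (auto intro!: deriv_idI[of p])
  qed
next
  case (L_bot \<Gamma> \<Delta>')
  then show ?case using deriv_wf[OF L_bot.prems(2)] by (auto intro!: deriv_L_botI)
next
  case (L_and X Y \<Gamma> \<Delta>')
  have "deriv (add_mset (And X Y) (add_mset F \<Gamma>)) \<Delta>"
    using L_and.prems(2) by (simp add: add_mset_commute)
  then have "deriv (add_mset X (add_mset Y (add_mset F \<Gamma>))) \<Delta>"
    by (rule deriv_And_leftD)
  then have "deriv (add_mset X (add_mset Y \<Gamma>)) \<Delta>"
    using L_and.IH L_and.prems(1,3) by (simp add: add_mset_commute)
  with L_and.hyps show ?case by (simp add: deriv.L_and)
next
  case (R_and X Y \<Gamma> \<Delta>')
  from R_and.prems have "F \<noteq> And X Y" by (auto simp: invertible_def)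
  then obtain K where K: "\<Delta>' = add_mset F K" "\<Delta> = add_mset (And X Y) K"
    using add_mset_eq_add_msetD[OF R_and.prems(1)[symmetric]] by metis
  have "deriv \<Gamma> (add_mset X K)"
    by (rule R_and.IH(1)) (use R_and.prems K deriv_And_rightD1 in \<open>auto simp: add_mset_commute\<close>)
  moreover have "deriv \<Gamma> (add_mset Y K)"
    by (rule R_and.IH(2)) (use R_and.prems K deriv_And_rightD2 in \<open>auto simp: add_mset_commute\<close>)
  ultimately show ?case using K R_and.hyps by (simp add: deriv.R_and)
next
  case (L_or X Y \<Gamma> \<Delta>')
  have "deriv (add_mset (Or X Y) (add_mset F \<Gamma>)) \<Delta>"
    using L_or.prems(2) by (simp add: add_mset_commute)
  then have "deriv (add_mset X (add_mset F \<Gamma>)) \<Delta>" "deriv (add_mset Y (add_mset F \<Gamma>)) \<Delta>"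
    by (rule deriv_Or_leftD1, rule deriv_Or_leftD2)
  then have "deriv (add_mset X \<Gamma>) \<Delta>" "deriv (add_mset Y \<Gamma>) \<Delta>"
    using L_or.IH L_or.prems(1,3) by (simp_all add: add_mset_commute)
  with L_or.hyps show ?case by (simp add: deriv.L_or)
next
  case (R_or X Y \<Gamma> \<Delta>')
  from R_or.prems have "F \<noteq> Or X Y" by (auto simp: invertible_def)
  then obtain K where K: "\<Delta>' = add_mset F K" "\<Delta> = add_mset (Or X Y) K"
    using add_mset_eq_add_msetD[OF R_or.prems(1)[symmetric]] by metis
  have "deriv \<Gamma> (add_mset X (add_mset Y K))"
    by (rule R_or.IH) (use R_or.prems K deriv_Or_rightD in \<open>auto simp: add_mset_commute\<close>)
  with K R_or.hyps show ?case by (simp add: deriv.R_or)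
next
  case (L_mimp A B \<Gamma> \<Delta>')
  have "deriv (add_mset (MImp A B) (add_mset F \<Gamma>)) \<Delta>"
    using L_mimp.prems(2) by (simp add: add_mset_commute)
  then have "deriv (add_mset F \<Gamma>) (add_mset A \<Delta>)" "deriv (add_mset B (add_mset F \<Gamma>)) \<Delta>"
    by (rule deriv_MImp_leftD1, rule deriv_MImp_leftD2)
  then have "deriv \<Gamma> (add_mset A \<Delta>)" "deriv (add_mset B \<Gamma>) \<Delta>"
    using L_mimp.IH L_mimp.prems(1,3) by (simp_all add: add_mset_commute)
  with L_mimp.hyps show ?case by (simp add: deriv.L_mimp)
next
  case (R_mimp A B \<Gamma> \<Delta>')
  from R_mimp.prems have "F \<noteq> MImp A B" by (auto simp: invertible_def)
  then obtain K where K: "\<Delta>' = add_mset F K" "\<Delta> = add_mset (MImp A B) K"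
    using add_mset_eq_add_msetD[OF R_mimp.prems(1)[symmetric]] by metis
  have "deriv (add_mset A \<Gamma>) (add_mset B K)"
    by (rule R_mimp.IH) (use R_mimp.prems K deriv_MImp_rightD in \<open>auto simp: add_mset_commute\<close>)
  with K R_mimp.hyps show ?case by (simp add: deriv.R_mimp)
next
  case (LR_imp A B C E \<Gamma> \<Delta>')
  show ?case
  proof (cases "F = Imp A B")
    case True
    with LR_imp show ?thesis
      by (auto intro: deriv_cut_Imp_principal_LR_imp[OF cut_MImp] simp: add_mset_commute)
  next
    case False
    with LR_imp obtain K where "\<Delta> = add_mset (Imp A B) K"
      using add_mset_eq_add_msetD[OF LR_imp.prems(1)[symmetric]] by metis
    with LR_imp show ?thesis by (simp add: deriv.LR_imp)
  qed
next
  case (R_imp A B \<Gamma> \<Delta>')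
  show ?case
  proof (cases "F = Imp A B")
    case True
    with R_imp show ?thesis by (auto intro: deriv_cut_Imp_principal_R_imp[OF cut_MImp])
  next
    case False
    with R_imp obtain K where "\<Delta> = add_mset (Imp A B) K"
      using add_mset_eq_add_msetD[OF R_imp.prems(1)[symmetric]] by metis
    with R_imp show ?thesis by (simp add: deriv.R_imp)
  qed
qed

lemma cut_admissible_on_all: "cut_admissible_on F"
proof (induction F)
  case (And X Y)
  then show ?case by (rule cut_admissible_on_And)
next
  case (Or X Y)
  then show ?case by (rule cut_admissible_on_Or)
next
  case (MImp A B)
  then show ?case by (rule cut_admissible_on_MImp)
next
  case (Imp A B)
  then have "cut_admissible_on (MImp A B)" by (rule cut_admissible_on_MImp)
  then show ?case
    by (auto simp: cut_admissible_on_def invertible_def intro: deriv_cut_noninvertible)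
qed (auto simp: cut_admissible_on_def invertible_def intro: deriv_cut_noninvertible)

theorem theorem3p6:
  assumes "is_frm2 D"
    and "wf_ms \<Gamma>" and "wf_ms \<Gamma>'" and "wf_ms \<Delta>" and "wf_ms \<Delta>'"
    and "deriv \<Gamma> (add_mset D \<Delta>)"
    and "deriv (add_mset D \<Gamma>') \<Delta>'"
  shows "deriv (\<Gamma> + \<Gamma>') (\<Delta> + \<Delta>')"
proof -
  have "deriv (\<Gamma> + \<Gamma>') (add_mset D (\<Delta> + \<Delta>'))"
    using deriv_weaken[OF assms(6,3,5)] by simp
  moreover have "deriv (add_mset D (\<Gamma> + \<Gamma>')) (\<Delta> + \<Delta>')"
    using deriv_weaken[OF assms(7,2,4)] by (simp add: add.commute)
  ultimately show ?thesis
    by (rule cut_admissible_onD[OF cut_admissible_on_all])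
qed

end
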